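(* Let $\bar p_{ij}>0$ ($i\in N=\{1,\dots,n\}$, $j\in M=\{1,\dots,m\}$) be given positive numbers. For a vector $f\in\mathbb{R}^n$ with positive components define $$\rho(f):=\frac{\max_{i\in N,j\in M}\bar p_{ij}/f_i}{\min_{i\in N,j\in M}\bar p_{ij}/f_i}.$$ Let $p^H_i:=\max_{j\in M}\bar p_{ij}$, $p^L_i:=\min_{j\in M}\bar p_{ij}$, $\rho_i:=p^H_i/p^L_i$, $\rho^*:=\max_{i\in N}\rho_i$, and $f^*_i:=\sqrt{p^L_ip^H_i}$. Then $\rho(f)\ge\rho^*$ for every positive vector $f$, and $\rho(f^* )=\rho^*$.
   Context: In the paper, $\bar p_{ij}$ is the optimal price of product $i$ for customer type $j$ under personalized pricing, and $\rho(f)=q_{\max}/q_{\min}$ determines the performance guarantee $1+\ln\rho(f)$ of pricing along the vector $f$; $f^*$ is called the robust factor. *)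

theory Defs
  imports Complex_Main
begin

text \<open>Products indexed by N = {1..n}, customer types by M = {1..m}; pbar i j is the
  personalized optimal price. Vectors f are functions nat => real (only values on N matter).\<close>

definition rho :: "nat \<Rightarrow> nat \<Rightarrow> (nat \<Rightarrow> nat \<Rightarrow> real) \<Rightarrow> (nat \<Rightarrow> real) \<Rightarrow> real" where
  "rho n m pbar f =
     (Max {pbar i j / f i | i j. i \<in> {1..n} \<and> j \<in> {1..m}}) /
     (Min {pbar i j / f i | i j. i \<in> {1..n} \<and> j \<in> {1..m}})"

definition pH :: "nat \<Rightarrow> (nat \<Rightarrow> nat \<Rightarrow> real) \<Rightarrow> nat \<Rightarrow> real" where
  "pH m pbar i = Max ((\<lambda>j. pbar i j) ` {1..m})"

definition pL :: "nat \<Rightarrow> (nat \<Rightarrow> nat \<Rightarrow> real) \<Rightarrow> nat \<Rightarrow> real" where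
  "pL m pbar i = Min ((\<lambda>j. pbar i j) ` {1..m})"

definition rho_i :: "nat \<Rightarrow> (nat \<Rightarrow> nat \<Rightarrow> real) \<Rightarrow> nat \<Rightarrow> real" where
  "rho_i m pbar i = pH m pbar i / pL m pbar i"

definition rho_star :: "nat \<Rightarrow> nat \<Rightarrow> (nat \<Rightarrow> nat \<Rightarrow> real) \<Rightarrow> real" where
  "rho_star n m pbar = Max ((\<lambda>i. rho_i m pbar i) ` {1..n})"

definition f_star :: "nat \<Rightarrow> (nat \<Rightarrow> nat \<Rightarrow> real) \<Rightarrow> nat \<Rightarrow> real" where
  "f_star m pbar i = sqrt (pL m pbar i * pH m pbar i)"

end

theory Submission
  imports Defs
begin

text \<open>Row \<open>k\<close> alone already contains the ratios \<open>p\<^sup>H\<^sub>k / f\<^sub>k\<close> and \<open>p\<^sup>L\<^sub>k / f\<^sub>k\<close>,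
  whose quotient is \<open>\<rho>\<^sub>k\<close> whatever \<open>f\<^sub>k\<close> is; hence \<open>\<rho>(f) \<ge> \<rho>\<^sub>k\<close> for all \<open>k\<close>.
  Dividing row \<open>i\<close> by the geometric mean \<open>f\<^sup>*\<^sub>i\<close> of its extreme prices places all its
  ratios in \<open>[1/\<surd>\<rho>\<^sub>i, \<surd>\<rho>\<^sub>i] \<subseteq> [1/\<surd>\<rho>\<^sup>*, \<surd>\<rho>\<^sup>*]\<close>, so \<open>\<rho>(f\<^sup>*) \<le> \<rho>\<^sup>*\<close>.\<close>

lemma Max_div_Min_ge:
  fixes A :: "real set"
  assumes "finite A" and pos: "\<forall>z\<in>A. 0 < z" and "x \<in> A" and "y \<in> A"
  shows "x / y \<le> Max A / Min A"
proof -
  have "x \<le> Max A" "Min A \<le> y" using assms by simp_all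
  moreover have "Min A \<in> A" using assms by (auto intro: Min_in)
  then have "0 < x" "0 < Min A" using assms by simp_all
  ultimately show ?thesis by (intro frac_le) auto
qed

lemma Max_div_Min_le:
  fixes A :: "real set"
  assumes "finite A" and "A \<noteq> {}" and "0 < c" and bounds: "\<forall>x\<in>A. c \<le> x \<and> x \<le> d"
  shows "Max A / Min A \<le> d / c"
proof (rule frac_le)
  have "Max A \<in> A" "Min A \<in> A" using assms(1,2) by simp_all
  then show "0 \<le> d" "Max A \<le> d" "c \<le> Min A"
    using bounds \<open>0 < c\<close> by fastforce+
qed (fact \<open>0 < c\<close>)

lemma pL_le:
  assumes "j \<in> {1..m}"
  shows "pL m pbar i \<le> pbar i j"
  unfolding pL_def using assms by simp

lemma pH_ge:
  assumes "j \<in> {1..m}"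
  shows "pbar i j \<le> pH m pbar i"
  unfolding pH_def using assms by simp

lemma pL_attained:
  assumes "m \<ge> 1"
  obtains j where "j \<in> {1..m}" and "pL m pbar i = pbar i j"
  using Min_in[of "(\<lambda>j. pbar i j) ` {1..m}"] assms unfolding pL_def by fastforce

lemma pH_attained:
  assumes "m \<ge> 1"
  obtains j where "j \<in> {1..m}" and "pH m pbar i = pbar i j"
  using Max_in[of "(\<lambda>j. pbar i j) ` {1..m}"] assms unfolding pH_def by fastforce

lemma pL_pos:
  assumes "m \<ge> 1" and "\<And>j. j \<in> {1..m} \<Longrightarrow> pbar i j > 0"
  shows "pL m pbar i > 0"
  using assms by (metis pL_attained)

lemma pL_le_pH: "m \<ge> 1 \<Longrightarrow> pL m pbar i \<le> pH m pbar i"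
  using pL_le[of 1 m pbar i] pH_ge[of 1 m pbar i] by simp

lemma f_star_pos:
  assumes "m \<ge> 1" and "\<And>j. j \<in> {1..m} \<Longrightarrow> pbar i j > 0"
  shows "f_star m pbar i > 0"
proof -
  have "0 < pL m pbar i" using pL_pos[of m pbar i, OF assms] .
  moreover have "0 < pH m pbar i" using calculation pL_le_pH[OF assms(1), of pbar i] by linarith
  ultimately show ?thesis unfolding f_star_def by simp
qed

lemma one_le_rho_i:
  assumes "m \<ge> 1" and "\<And>j. j \<in> {1..m} \<Longrightarrow> pbar i j > 0"
  shows "1 \<le> rho_i m pbar i"
  using pL_pos[of m pbar i, OF assms] pL_le_pH[OF assms(1)] unfolding rho_i_def by simp

lemma rho_i_le_rho_star:
  assumes "i \<in> {1..n}"
  shows "rho_i m pbar i \<le> rho_star n m pbar"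
  unfolding rho_star_def using assms by simp

lemma geometric_mean_ratio_bounds:
  fixes L U p R :: real
  assumes "0 < L" and "L \<le> p" and "p \<le> U" and "U / L \<le> R"
  shows "1 / sqrt R \<le> p / sqrt (L * U)" and "p / sqrt (L * U) \<le> sqrt R"
proof -
  have "0 < U" using assms by linarith
  have "0 < U / L" using \<open>0 < L\<close> \<open>0 < U\<close> by simp
  then have "0 < R" using assms by linarith
  have sq: "(p / sqrt (L * U))\<^sup>2 = p\<^sup>2 / (L * U)"
    using \<open>0 < L\<close> \<open>0 < U\<close> by (simp add: power_divide)
  have "p\<^sup>2 / (L * U) \<le> U / L"
    using assms \<open>0 < U\<close> by (simp add: field_simps power2_eq_square mult_mono)
  then show "p / sqrt (L * U) \<le> sqrt R"
    using sq assms by (metis order.trans real_le_rsqrt)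
  have "L / U \<le> p\<^sup>2 / (L * U)"
    using assms \<open>0 < U\<close> by (simp add: field_simps power2_eq_square mult_mono)
  moreover have "1 / R \<le> L / U"
    using assms \<open>0 < U\<close> \<open>0 < R\<close> by (simp add: field_simps)
  ultimately have "sqrt (1 / R) \<le> sqrt ((p / sqrt (L * U))\<^sup>2)"
    using sq by (simp del: real_sqrt_divide)
  then show "1 / sqrt R \<le> p / sqrt (L * U)"
    using assms \<open>0 < U\<close> by (simp add: real_sqrt_divide)
qed

definition ratios :: "nat \<Rightarrow> nat \<Rightarrow> (nat \<Rightarrow> nat \<Rightarrow> real) \<Rightarrow> (nat \<Rightarrow> real) \<Rightarrow> real set" where
  "ratios n m pbar f = (\<lambda>(i, j). pbar i j / f i) ` ({1..n} \<times> {1..m})"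

lemma rho_eq_ratios: "rho n m pbar f = Max (ratios n m pbar f) / Min (ratios n m pbar f)"
proof -
  have "{pbar i j / f i | i j. i \<in> {1..n} \<and> j \<in> {1..m}} = ratios n m pbar f"
    unfolding ratios_def by force
  then show ?thesis unfolding rho_def by simp
qed

lemma finite_ratios: "finite (ratios n m pbar f)"
  unfolding ratios_def by simp

lemma ratios_nonempty: "n \<ge> 1 \<Longrightarrow> m \<ge> 1 \<Longrightarrow> ratios n m pbar f \<noteq> {}"
  unfolding ratios_def by auto

lemma ratios_pos:
  assumes "\<And>i j. i \<in> {1..n} \<Longrightarrow> j \<in> {1..m} \<Longrightarrow> pbar i j > 0"
    and "\<forall>i\<in>{1..n}. f i > 0"
  shows "\<forall>x\<in>ratios n m pbar f. 0 < x"
  unfolding ratios_def using assms by auto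

lemma rho_i_le_rho:
  assumes m: "m \<ge> 1" and pos: "\<And>i j. i \<in> {1..n} \<Longrightarrow> j \<in> {1..m} \<Longrightarrow> pbar i j > 0"
    and f: "\<forall>i\<in>{1..n}. f i > 0" and k: "k \<in> {1..n}"
  shows "rho_i m pbar k \<le> rho n m pbar f"
proof -
  obtain jH where jH: "jH \<in> {1..m}" "pH m pbar k = pbar k jH" using pH_attained m .
  obtain jL where jL: "jL \<in> {1..m}" "pL m pbar k = pbar k jL" using pL_attained m .
  have mem: "pbar k j / f k \<in> ratios n m pbar f" if "j \<in> {1..m}" for j
    unfolding ratios_def using k that by force
  have "rho_i m pbar k = (pbar k jH / f k) / (pbar k jL / f k)"
    unfolding rho_i_def jH(2) jL(2) using f k by force
  also have "\<dots> \<le> rho n m pbar f"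
    unfolding rho_eq_ratios
    using Max_div_Min_ge[OF finite_ratios ratios_pos[OF pos f] mem[OF jH(1)] mem[OF jL(1)]] .
  finally show ?thesis .
qed

lemma rho_star_le_rho:
  assumes "n \<ge> 1" and "m \<ge> 1"
    and "\<And>i j. i \<in> {1..n} \<Longrightarrow> j \<in> {1..m} \<Longrightarrow> pbar i j > 0"
    and "\<forall>i\<in>{1..n}. f i > 0"
  shows "rho_star n m pbar \<le> rho n m pbar f"
  unfolding rho_star_def using assms rho_i_le_rho by (subst Max_le_iff) auto

lemma rho_f_star_le_rho_star:
  assumes n: "n \<ge> 1" and m: "m \<ge> 1"
    and pos: "\<And>i j. i \<in> {1..n} \<Longrightarrow> j \<in> {1..m} \<Longrightarrow> pbar i j > 0"
  shows "rho n m pbar (f_star m pbar) \<le> rho_star n m pbar"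
proof -
  define R where "R = rho_star n m pbar"
  have row: "0 < pL m pbar i" "pH m pbar i / pL m pbar i \<le> R" if "i \<in> {1..n}" for i
    using pL_pos[of m pbar i, OF m pos[OF that]] rho_i_le_rho_star[OF that]
    unfolding R_def rho_i_def by simp_all
  have bounds: "1 / sqrt R \<le> x \<and> x \<le> sqrt R"
    if x_mem: "x \<in> ratios n m pbar (f_star m pbar)" for x
  proof -
    obtain i j where ij: "i \<in> {1..n}" "j \<in> {1..m}" and x: "x = pbar i j / f_star m pbar i"
      using x_mem unfolding ratios_def by force
    show ?thesis
      unfolding x f_star_def
      using geometric_mean_ratio_bounds[OF row(1)[OF ij(1)] pL_le[OF ij(2)] pH_ge[OF ij(2)] row(2)[OF ij(1)]]
      by simp
  qed
  have "1 \<in> {1..n}" using n by simp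
  then have "0 < R"
    using one_le_rho_i[of m pbar 1, OF m pos[OF \<open>1 \<in> {1..n}\<close>]] rho_i_le_rho_star[of 1 n m pbar]
    unfolding R_def by (meson less_le_trans zero_less_one)
  then have "rho n m pbar (f_star m pbar) \<le> sqrt R / (1 / sqrt R)"
    unfolding rho_eq_ratios
    by (intro Max_div_Min_le[OF finite_ratios ratios_nonempty[OF n m]]) (simp_all add: bounds)
  also have "\<dots> = R" using \<open>0 < R\<close> by simp
  finally show ?thesis unfolding R_def .
qed

theorem theorem2:
  fixes n m :: nat and pbar :: "nat \<Rightarrow> nat \<Rightarrow> real"
  assumes "n \<ge> 1" and "m \<ge> 1"
    and "\<And>i j. i \<in> {1..n} \<Longrightarrow> j \<in> {1..m} \<Longrightarrow> pbar i j > 0"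
  shows "(\<forall>f. (\<forall>i\<in>{1..n}. f i > 0) \<longrightarrow> rho n m pbar f \<ge> rho_star n m pbar)
    \<and> rho n m pbar (f_star m pbar) = rho_star n m pbar"
proof -
  have "\<forall>i\<in>{1..n}. f_star m pbar i > 0"
    using f_star_pos assms by blast
  then show ?thesis
    using rho_star_le_rho[OF assms] rho_f_star_le_rho_star[OF assms] by (auto intro: antisym)
qed

end
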